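(* Let $n\ge 2$, $m\ge 1$ and consider a star junction in which pipes $P_1,\dots,P_n$ connect at a single node to pipes $P_{n+1},\dots,P_{n+m}$. Suppose real differentiable functions $p_{j,\ell},p_{j,r},q_{j,\ell},q_{j,r}$ ($j=1,\dots,n+m$) satisfy, for all $t$, \[ \dot p_{j,r}=c_j(q_{j,r}-q_{j,\ell}),\qquad \dot q_{j,\ell}=b_jp_{j,r}+d_jp_{j,\ell}+e_jq_{j,\ell}, \] and the junction constraints \[ p_{1,r}=\dots=p_{n,r}=p_{n+1,\ell}=\dots=p_{n+m,\ell},\qquad \sum_{k=1}^n q_{k,r}=\sum_{j=n+1}^{n+m}q_{j,\ell}. \] Then for every $k\in\{1,\dots,n\}$ and $j\in\{n+1,\dots,n+m\}$, for all $t$, \[ \left(\sum_{j'=1}^n\prod_{\substack{i=1\\ i\neq j'}}^n c_i\right)q_{k,r}=\prod_{\substack{i=1\\ i\neq k}}^n c_i\left(\sum_{i=n+1}^{n+m}q_{i,\ell}-\sum_{\substack{i=1\\ i\neq k}}^n q_{i,\ell}\right)+\left(\sum_{j'=1}^n\prod_{\substack{i=1\\ i\neq j'}}^n c_i-\prod_{\substack{i=1\\ i\neq k}}^n c_i\right)q_{k,\ell}, \qquad p_{j,\ell}=p_{1,r}. \]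
   Context: Linearized isothermal one-dimensional pipe flow model: $p$ pressure, $q$ mass flow, subscripts $\ell,r$ the left ($x=0$) and right ($x=L_j$) ends of pipe $P_j$. Coefficients: $c_j=-\frac{R_sT_0z_0}{A_jL_j}$, $b_j=-\frac{A_j}{L_j}$, $d_j=\frac{A_j}{L_j}+\frac{\lambda_j R_sT_0z_0}{2D_jA_j}\frac{q_{ss,j}|q_{ss,j}|}{p_{\ell,ss,j}^2}-\frac{A_jgh_j}{R_sT_0z_0L_j}$, $e_j=-\frac{\lambda_j R_sT_0z_0}{D_jA_j}\frac{|q_{ss,j}|}{p_{\ell,ss,j}}$, with positive constants $R_s,T_0,z_0$, gravity $g$, and per-pipe area $A_j>0$, length $L_j>0$, diameter $D_j>0$, friction factor $\lambda_j$, elevation difference $h_j$, nominal flow $q_{ss,j}>0$, nominal left pressure $p_{\ell,ss,j}>0$; hence all $c_j<0$. The variables $q_{i,\ell}$ ($i=1,\dots,n+m$) and $p_{1,r}$ are regarded as state variables; $q_{k,r}$ ($k\le n$) and $p_{j,\ell}$ ($j>n$) are internal variables. *)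

theory Defs
  imports "HOL-Analysis.Analysis"
begin

text \<open>Coefficients of the linearized isothermal pipe flow model for a single pipe,
  as functions of the physical constants Rs, T0, z0, g and the pipe parameters
  A (area), L (length), D (diameter), lam (friction factor), h (elevation difference),
  qss (nominal flow), pss (nominal left pressure).\<close>

definition pipe_c :: "real \<Rightarrow> real \<Rightarrow> real \<Rightarrow> real \<Rightarrow> real \<Rightarrow> real" where
  "pipe_c Rs T0 z0 A L = - (Rs * T0 * z0) / (A * L)"

definition pipe_b :: "real \<Rightarrow> real \<Rightarrow> real" where
  "pipe_b A L = - A / L"

definition pipe_d :: "real \<Rightarrow> real \<Rightarrow> real \<Rightarrow> real \<Rightarrow> real \<Rightarrow> real \<Rightarrow> real \<Rightarrow> real
    \<Rightarrow> real \<Rightarrow> real \<Rightarrow> real \<Rightarrow> real" where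
  "pipe_d Rs T0 z0 g A L D lam h qss pss =
     A / L + (lam * Rs * T0 * z0) / (2 * D * A) * (qss * \<bar>qss\<bar>) / pss ^ 2
     - (A * g * h) / (Rs * T0 * z0 * L)"

definition pipe_e :: "real \<Rightarrow> real \<Rightarrow> real \<Rightarrow> real \<Rightarrow> real \<Rightarrow> real \<Rightarrow> real \<Rightarrow> real \<Rightarrow> real" where
  "pipe_e Rs T0 z0 A D lam qss pss = - ((lam * Rs * T0 * z0) / (D * A)) * (\<bar>qss\<bar> / pss)"

end

theory Submission
  imports Defs
begin

text \<open>All inflow pipes share the junction pressure, so their pressure derivatives
  c_i (q_{i,r} - q_{i,l}) coincide for i \<le> n. Hence in the sum over j of
  (\<Prod>i\<noteq>j. c_i) (q_{k,r} - q_{k,l}) each summand equals (\<Prod>i\<noteq>k. c_i) (q_{j,r} - q_{j,l}),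
  and the resulting total net inflow is given by Kirchhoff's law.\<close>

lemma prod_remove_mult_swap:
  fixes c d :: "'a \<Rightarrow> 'b::comm_semiring_1"
  assumes "finite I" "j \<in> I" "k \<in> I" and balanced: "c j * d j = c k * d k"
  shows "(\<Prod>i\<in>I-{j}. c i) * d k = (\<Prod>i\<in>I-{k}. c i) * d j"
proof (cases "j = k")
  case False
  define J where "J = I-{j,k}"
  have "I-{j} = insert k J" "I-{k} = insert j J" "finite J" "j \<notin> J" "k \<notin> J"
    using assms False by (auto simp: J_def)
  then have "(\<Prod>i\<in>I-{j}. c i) * d k = prod c J * (c k * d k)"
    and "(\<Prod>i\<in>I-{k}. c i) * d j = prod c J * (c j * d j)"
    by (simp_all add: ac_simps)
  with balanced show ?thesis
    by simp
qed simp

lemma sum_prod_remove_mult_balanced: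
  fixes c d :: "'a \<Rightarrow> 'b::comm_semiring_1"
  assumes "finite I" "k \<in> I" "\<forall>j\<in>I. c j * d j = c k * d k"
  shows "(\<Sum>j\<in>I. \<Prod>i\<in>I-{j}. c i) * d k = (\<Prod>i\<in>I-{k}. c i) * (\<Sum>j\<in>I. d j)"
proof -
  have "(\<Sum>j\<in>I. \<Prod>i\<in>I-{j}. c i) * d k = (\<Sum>j\<in>I. (\<Prod>i\<in>I-{k}. c i) * d j)"
    unfolding sum_distrib_right
  proof (rule sum.cong)
    show "(\<Prod>i\<in>I-{j}. c i) * d k = (\<Prod>i\<in>I-{k}. c i) * d j" if "j \<in> I" for j
      using assms that by (intro prod_remove_mult_swap) blast+
  qed simp
  then show ?thesis
    by (simp add: sum_distrib_left)
qed

theorem corollary3: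
  fixes n m :: nat
    and Rs T0 z0 g :: real
    and A L D lam h qss pss :: "nat \<Rightarrow> real"
    and p_l p_r q_l q_r :: "nat \<Rightarrow> real \<Rightarrow> real"
  assumes n2: "n \<ge> 2" and m1: "m \<ge> 1"
    and consts_pos: "Rs > 0" "T0 > 0" "z0 > 0"
    and params: "\<forall>j\<in>{1..n+m}. A j > 0 \<and> L j > 0 \<and> D j > 0 \<and> qss j > 0 \<and> pss j > 0"
    and diff: "\<forall>j\<in>{1..n+m}. \<forall>t. p_l j differentiable (at t) \<and> p_r j differentiable (at t)
                 \<and> q_l j differentiable (at t) \<and> q_r j differentiable (at t)"
    and ode_p: "\<forall>j\<in>{1..n+m}. \<forall>t.
       (p_r j has_real_derivative pipe_c Rs T0 z0 (A j) (L j) * (q_r j t - q_l j t)) (at t)"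
    and ode_q: "\<forall>j\<in>{1..n+m}. \<forall>t.
       (q_l j has_real_derivative
          pipe_b (A j) (L j) * p_r j t
          + pipe_d Rs T0 z0 g (A j) (L j) (D j) (lam j) (h j) (qss j) (pss j) * p_l j t
          + pipe_e Rs T0 z0 (A j) (D j) (lam j) (qss j) (pss j) * q_l j t) (at t)"
    and junc_in: "\<forall>k\<in>{1..n}. \<forall>t. p_r k t = p_r 1 t"
    and junc_out: "\<forall>j\<in>{n+1..n+m}. \<forall>t. p_l j t = p_r 1 t"
    and kirchhoff: "\<forall>t. (\<Sum>k=1..n. q_r k t) = (\<Sum>j=n+1..n+m. q_l j t)"
  shows "\<forall>k\<in>{1..n}. \<forall>j\<in>{n+1..n+m}. \<forall>t.
     (let c = (\<lambda>i. pipe_c Rs T0 z0 (A i) (L i));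
          S = (\<Sum>j'=1..n. \<Prod>i\<in>{1..n}-{j'}. c i);
          Pk = (\<Prod>i\<in>{1..n}-{k}. c i)
      in S * q_r k t
         = Pk * ((\<Sum>i=n+1..n+m. q_l i t) - (\<Sum>i\<in>{1..n}-{k}. q_l i t)) + (S - Pk) * q_l k t)
     \<and> p_l j t = p_r 1 t"
  unfolding Let_def
proof (intro ballI allI conjI)
  fix k j t
  assume k: "k \<in> {1..n}" and j: "j \<in> {n+1..n+m}"
  define c where "c i = pipe_c Rs T0 z0 (A i) (L i)" for i
  define d where "d i = q_r i t - q_l i t" for i
  define S where "S = (\<Sum>j'=1..n. \<Prod>i\<in>{1..n}-{j'}. c i)"
  define Pk where "Pk = (\<Prod>i\<in>{1..n}-{k}. c i)"
  have pressure_derivative: "(p_r 1 has_real_derivative c i * d i) (at t)" if "i \<in> {1..n}" for i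
  proof -
    have "i \<in> {1..n+m}"
      using that by simp
    then have "(p_r i has_real_derivative c i * d i) (at t)"
      using ode_p unfolding c_def d_def by blast
    moreover have "p_r i = p_r 1"
      by (intro ext) (use junc_in that in blast)
    ultimately show ?thesis
      by simp
  qed
  have balanced: "\<forall>i\<in>{1..n}. c i * d i = c k * d k"
    using DERIV_unique pressure_derivative k by blast
  have "S * d k = Pk * (\<Sum>i=1..n. d i)"
    unfolding S_def Pk_def by (rule sum_prod_remove_mult_balanced[OF _ k balanced]) simp
  also have "(\<Sum>i=1..n. d i) = (\<Sum>i=n+1..n+m. q_l i t) - (\<Sum>i=1..n. q_l i t)"
    unfolding d_def sum_subtractf using kirchhoff by simp
  also have "(\<Sum>i=1..n. q_l i t) = q_l k t + (\<Sum>i\<in>{1..n}-{k}. q_l i t)"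
    using k by (simp add: sum.remove)
  finally have "S * d k
      = Pk * ((\<Sum>i=n+1..n+m. q_l i t) - (q_l k t + (\<Sum>i\<in>{1..n}-{k}. q_l i t)))" .
  then show "S * q_r k t
      = Pk * ((\<Sum>i=n+1..n+m. q_l i t) - (\<Sum>i\<in>{1..n}-{k}. q_l i t)) + (S - Pk) * q_l k t"
    unfolding d_def by (simp add: algebra_simps)
  show "p_l j t = p_r 1 t"
    using junc_out j by blast
qed

end
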